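(* There exists a frameless $2$-coloring of the infinite plane lattice $\mathbb{Z}\times\mathbb{Z}$; that is, there is a map $f:\mathbb{Z}\times\mathbb{Z}\to\Delta$ with $|\Delta|=2$ such that there do not exist integers $m,n$ and integers $p,q\ge 1$ with $f(m,n+i)=f(m+p,n+i)$ for all $0\le i\le q$ and $f(m+j,n)=f(m+j,n+q)$ for all $0\le j\le p$.
   Context: A coloring of $\mathbb{Z}\times\mathbb{Z}$ is a map into a finite set $\Delta$ of colors; a $k$-coloring uses $|\Delta|=k$. A picture frame in a coloring $f$ is a finite rectangular block $\{m,\dots,m+p\}\times\{n,\dots,n+q\}$ with $p,q\ge1$ whose first and last rows agree and whose first and last columns agree, i.e. $f(m,n+i)=f(m+p,n+i)$ for $0\le i\le q$ and $f(m+j,n)=f(m+j,n+q)$ for $0\le j\le p$. A coloring is frameless if it contains no picture frame. *)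

theory Defs
  imports Main
begin

definition picture_frame :: "(int \<times> int \<Rightarrow> 'c) \<Rightarrow> int \<Rightarrow> int \<Rightarrow> int \<Rightarrow> int \<Rightarrow> bool" where
  "picture_frame f m n p q \<longleftrightarrow>
     p \<ge> 1 \<and> q \<ge> 1 \<and>
     (\<forall>i. 0 \<le> i \<and> i \<le> q \<longrightarrow> f (m, n + i) = f (m + p, n + i)) \<and>
     (\<forall>j. 0 \<le> j \<and> j \<le> p \<longrightarrow> f (m + j, n) = f (m + j, n + q))"

definition frameless :: "(int \<times> int \<Rightarrow> 'c) \<Rightarrow> bool" where
  "frameless f \<longleftrightarrow> \<not> (\<exists>m n p q. picture_frame f m n p q)"

end

theory Submission
  imports Defs
begin

text \<open>Colour \<open>(x, y)\<close> by the two-sided Thue--Morse word \<open>w\<close> at \<open>x + y\<close>. In a picture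
  frame of size \<open>p \<times> q\<close>, the two opposite sides at distance \<open>r = min p q\<close> give
  \<open>w (c + i) = w (c + i + r)\<close> for \<open>0 \<le> i \<le> r\<close>: an overlap of period \<open>r\<close> on the diagonal.
  Every finite factor of \<open>w\<close> is a factor of the one-sided Thue--Morse sequence, which is
  overlap-free by Thue's theorem: an overlap of odd period would put two squares \<open>aa\<close>
  at positions of different parity, and one of even period halves to an overlap of half
  the period.\<close>

definition overlap :: "('i::linordered_semidom \<Rightarrow> 'a) \<Rightarrow> 'i \<Rightarrow> 'i \<Rightarrow> bool" where
  "overlap w a p \<longleftrightarrow> 1 \<le> p \<and> (\<forall>t. a \<le> t \<and> t \<le> a + p \<longrightarrow> w t = w (t + p))"

lemma picture_frame_diagonal_overlap:
  assumes "picture_frame (\<lambda>(x, y). w (x + y)) m n p q"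
  shows "overlap w (m + n) (min p q)"
  unfolding overlap_def
proof (intro conjI allI impI)
  show "1 \<le> min p q"
    using assms by (simp add: picture_frame_def)
next
  fix t assume t: "m + n \<le> t \<and> t \<le> m + n + min p q"
  have col: "w (m + (n + i)) = w (m + p + (n + i))" if "0 \<le> i" "i \<le> q" for i
    using assms that by (simp add: picture_frame_def)
  have row: "w (m + j + n) = w (m + j + (n + q))" if "0 \<le> j" "j \<le> p" for j
    using assms that by (simp add: picture_frame_def)
  show "w t = w (t + min p q)"
    using t col[of "t - m - n"] row[of "t - m - n"] by (cases "p \<le> q") (simp_all add: algebra_simps)
qed

fun thue_morse :: "nat \<Rightarrow> bool" where
  "thue_morse n = (if n = 0 then False else thue_morse (n div 2) \<noteq> odd n)"

declare thue_morse.simps [simp del]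

lemma thue_morse_0 [simp]: "\<not> thue_morse 0"
  by (simp add: thue_morse.simps)

lemma thue_morse_Suc_0 [simp]: "thue_morse (Suc 0)"
  by (simp add: thue_morse.simps[of "Suc 0"])

lemma thue_morse_div2: "thue_morse n = (thue_morse (n div 2) \<noteq> odd n)"
  by (cases "n = 0") (simp_all add: thue_morse.simps[of n])

lemma thue_morse_double [simp]: "thue_morse (2 * n) = thue_morse n"
  by (subst thue_morse_div2) simp

lemma thue_morse_double_plus_1 [simp]: "thue_morse (2 * n + 1) = (\<not> thue_morse n)"
  by (subst thue_morse_div2) simp

lemma thue_morse_double_Suc [simp]: "thue_morse (Suc (2 * n)) = (\<not> thue_morse n)"
  using thue_morse_double_plus_1 by simp

lemma thue_morse_concat:
  assumes "n < 2 ^ k"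
  shows "thue_morse (m * 2 ^ k + n) = (thue_morse m \<noteq> thue_morse n)"
  using assms
proof (induction k arbitrary: n)
  case 0
  then show ?case by simp
next
  case (Suc k)
  have "(m * 2 ^ Suc k + n) div 2 = m * 2 ^ k + n div 2"
    by simp
  moreover have "n div 2 < 2 ^ k"
    using Suc.prems by simp
  ultimately show ?case
    using Suc.IH thue_morse_div2[of "m * 2 ^ Suc k + n"] thue_morse_div2[of n] by auto
qed

lemma thue_morse_add_3_pow4:
  assumes "u < 2 * 4 ^ k"
  shows "thue_morse (u + 3 * 4 ^ k) = thue_morse u"
proof -
  define d where "d = u div 4 ^ k"
  have pow4: "(4::nat) ^ k = 2 ^ (2 * k)"
    by (simp add: power_mult)
  have "d < 2"
    using assms by (simp add: d_def less_mult_imp_div_less)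
  then have "thue_morse (d + 3) = thue_morse d"
    by (auto simp: less_2_cases_iff thue_morse_div2[of 1] thue_morse_div2[of 2]
        thue_morse_div2[of 3] thue_morse_div2[of 4])
  moreover have "u = d * 4 ^ k + u mod 4 ^ k" "u + 3 * 4 ^ k = (d + 3) * 4 ^ k + u mod 4 ^ k"
    by (simp_all add: d_def algebra_simps)
  moreover have "u mod 4 ^ k < 2 ^ (2 * k)"
    using pow4 by simp
  ultimately show ?thesis
    using thue_morse_concat pow4 by metis
qed

lemma overlap_shift_equal_neighbours:
  fixes w :: "nat \<Rightarrow> 'a"
  assumes "overlap w a p" "a \<le> i" "i < a + 2 * p" "w i = w (Suc i)"
  shows "\<exists>j. (j + p = i \<or> j = i + p) \<and> w j = w (Suc j)"
proof (cases "i < a + p")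
  case True
  with assms have "w (i + p) = w (Suc i + p)"
    by (simp add: overlap_def)
  then show ?thesis by auto
next
  case False
  define j where "j = i - p"
  have "i = j + p" "a \<le> j" "Suc j \<le> a + p"
    using False assms(3) by (simp_all add: j_def)
  with assms have "w j = w (Suc j)"
    by (simp add: overlap_def)
  then show ?thesis
    using \<open>i = j + p\<close> by auto
qed

lemma thue_morse_eq_Suc_imp_odd: "thue_morse i = thue_morse (Suc i) \<Longrightarrow> odd i"
  by (auto elim: evenE)

lemma thue_morse_not_cube: "\<not> (thue_morse i = thue_morse (i + 1) \<and> thue_morse (i + 1) = thue_morse (i + 2))"
  using thue_morse_eq_Suc_imp_odd[of i] thue_morse_eq_Suc_imp_odd[of "i + 1"] by auto

lemma thue_morse_equal_neighbours_within_4: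
  "\<exists>i. a \<le> i \<and> i \<le> a + 3 \<and> thue_morse i = thue_morse (Suc i)"
proof (rule ccontr)
  assume none: "\<not> ?thesis"
  define b where "b = a div 2"
  have "a \<le> 2 * b + 1" "2 * b + 3 \<le> a + 3"
    by (simp_all add: b_def)
  then have "thue_morse (2 * b + 1) \<noteq> thue_morse (2 * (b + 1))"
    "thue_morse (2 * (b + 1) + 1) \<noteq> thue_morse (2 * (b + 2))"
    using none by (auto simp: algebra_simps)
  then show False
    using thue_morse_not_cube[of b] by (simp only: thue_morse_double thue_morse_double_plus_1) auto
qed

lemma thue_morse_overlap_even_period:
  assumes "overlap thue_morse a p"
  shows "even p"
proof (rule ccontr)
  assume "odd p"
  show False
  proof (cases "p = 1")
    case True
    then show False
      using assms thue_morse_not_cube[of a] by (simp add: overlap_def add.assoc)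
  next
    case False
    with \<open>odd p\<close> assms have "p \<ge> 3"
      by (auto simp: overlap_def elim!: oddE)
    obtain i where "a \<le> i" "i \<le> a + 3" "thue_morse i = thue_morse (Suc i)"
      using thue_morse_equal_neighbours_within_4 by blast
    moreover obtain j where "j + p = i \<or> j = i + p" "thue_morse j = thue_morse (Suc j)"
      using overlap_shift_equal_neighbours[OF assms] calculation \<open>p \<ge> 3\<close> by fastforce
    ultimately show False
      using \<open>odd p\<close> thue_morse_eq_Suc_imp_odd by fastforce
  qed
qed

lemma thue_morse_overlap_half:
  assumes "overlap thue_morse a (2 * r)"
  shows "overlap thue_morse (a div 2) r"
  unfolding overlap_def
proof (intro conjI allI impI)
  show "1 \<le> r"
    using assms by (simp add: overlap_def)
next
  fix s assume s: "a div 2 \<le> s \<and> s \<le> a div 2 + r"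
  define t where "t = 2 * s + a mod 2"
  have "a = 2 * (a div 2) + a mod 2"
    by simp
  then have "a \<le> t" "t \<le> a + 2 * r"
    using s unfolding t_def by linarith+
  then have "thue_morse t = thue_morse (t + 2 * r)"
    using assms by (simp add: overlap_def)
  moreover have "t div 2 = s" "(t + 2 * r) div 2 = s + r" "odd (t + 2 * r) = odd t"
    by (simp_all add: t_def)
  ultimately show "thue_morse s = thue_morse (s + r)"
    using thue_morse_div2[of t] thue_morse_div2[of "t + 2 * r"] by auto
qed

theorem thue_morse_overlap_free: "\<not> overlap thue_morse a p"
proof (induction p arbitrary: a rule: less_induct)
  case (less p)
  show ?case
  proof
    assume overlap: "overlap thue_morse a p"
    then obtain r where "p = 2 * r"
      using thue_morse_overlap_even_period by blast
    moreover have "1 \<le> p"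
      using overlap by (simp add: overlap_def)
    ultimately show False
      using less.IH[of r "a div 2"] thue_morse_overlap_half overlap by simp
  qed
qed

lemma thue_morse_shift_pow4_Suc:
  fixes z :: int
  assumes "\<bar>z\<bar> < 4 ^ k"
  shows "thue_morse (nat (z + 4 ^ Suc k)) = thue_morse (nat (z + 4 ^ k))"
proof -
  define u where "u = nat (z + 4 ^ k)"
  have "int u = z + 4 ^ k"
    using assms by (simp add: u_def)
  then have "int u < int (2 * 4 ^ k)" "z + 4 ^ Suc k = int (u + 3 * 4 ^ k)"
    using assms by simp_all
  then have "u < 2 * 4 ^ k" "nat (z + 4 ^ Suc k) = u + 3 * 4 ^ k"
    by (simp_all only: of_nat_less_iff nat_int)
  then show ?thesis
    by (simp add: u_def thue_morse_add_3_pow4)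
qed

lemma thue_morse_shift_pow4_mono:
  fixes z :: int
  assumes "\<bar>z\<bar> < 4 ^ k" "k \<le> l"
  shows "thue_morse (nat (z + 4 ^ l)) = thue_morse (nat (z + 4 ^ k))"
  using assms(2)
proof (induction l rule: dec_induct)
  case base
  then show ?case by simp
next
  case (step l)
  have "(4::int) ^ k \<le> 4 ^ l"
    using step.hyps(1) by (simp add: power_increasing)
  then have "\<bar>z\<bar> < 4 ^ l"
    using assms(1) by linarith
  then show ?case
    using step.IH thue_morse_shift_pow4_Suc[of z l] by simp
qed

text \<open>By \<open>thue_morse_shift_pow4_mono\<close> the values \<open>thue_morse (nat (z + 4 ^ k))\<close> do not
  depend on \<open>k\<close> once \<open>\<bar>z\<bar> < 4 ^ k\<close>, and \<open>k = nat \<bar>z\<bar>\<close> is such a \<open>k\<close>.\<close>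

definition thue_morse_int :: "int \<Rightarrow> bool" where
  "thue_morse_int z = thue_morse (nat (z + 4 ^ nat \<bar>z\<bar>))"

lemma int_less_pow4: "int n < 4 ^ n"
proof -
  have "n < 2 ^ n"
    by (rule less_exp)
  also have "(2::nat) ^ n \<le> 4 ^ n"
    by (simp add: power_mono)
  finally show ?thesis
    by (metis of_nat_less_iff of_nat_numeral of_nat_power)
qed

lemma thue_morse_int_eq:
  assumes "\<bar>z\<bar> < 4 ^ k"
  shows "thue_morse_int z = thue_morse (nat (z + 4 ^ k))"
proof -
  have "\<bar>z\<bar> < 4 ^ nat \<bar>z\<bar>"
    using int_less_pow4[of "nat \<bar>z\<bar>"] by simp
  then show ?thesis
    using assms thue_morse_shift_pow4_mono[of z _ "max k (nat \<bar>z\<bar>)"]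
    unfolding thue_morse_int_def by (metis max.cobounded1 max.cobounded2)
qed

lemma thue_morse_int_overlap:
  assumes "overlap thue_morse_int c r"
  shows "\<exists>b. overlap thue_morse b (nat r)"
proof -
  have r: "1 \<le> r"
    using assms by (simp add: overlap_def)
  define k where "k = nat \<bar>c\<bar> + 2 * nat r"
  have "int k < 4 ^ k"
    by (rule int_less_pow4)
  then have large: "\<bar>c\<bar> + 2 * r < 4 ^ k"
    using r by (simp add: k_def)
  have window: "thue_morse_int z = thue_morse (nat (z + 4 ^ k))" if "c \<le> z" "z \<le> c + 2 * r" for z
    using that large by (intro thue_morse_int_eq) linarith
  have "overlap thue_morse (nat (c + 4 ^ k)) (nat r)"
    unfolding overlap_def
  proof (intro conjI allI impI)
    show "1 \<le> nat r"
      using r by simp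
  next
    fix t assume t: "nat (c + 4 ^ k) \<le> t \<and> t \<le> nat (c + 4 ^ k) + nat r"
    define z where "z = int t - 4 ^ k"
    have "c \<le> z" "z \<le> c + r" "nat (z + 4 ^ k) = t" "nat (z + r + 4 ^ k) = t + nat r"
      using t r large by (auto simp: z_def)
    moreover have "thue_morse_int z = thue_morse_int (z + r)"
      using assms calculation by (simp add: overlap_def)
    ultimately show "thue_morse t = thue_morse (t + nat r)"
      using window[of z] window[of "z + r"] r by (simp add: add.commute add.left_commute)
  qed
  then show ?thesis ..
qed

theorem theorem2:
  shows "\<exists>f :: int \<times> int \<Rightarrow> bool. frameless f"
proof
  show "frameless (\<lambda>(x, y). thue_morse_int (x + y))"
    unfolding frameless_def
  proof
    assume "\<exists>m n p q. picture_frame (\<lambda>(x, y). thue_morse_int (x + y)) m n p q"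
    then obtain m n p q where "overlap thue_morse_int (m + n) (min p q)"
      using picture_frame_diagonal_overlap by blast
    then obtain b where "overlap thue_morse b (nat (min p q))"
      using thue_morse_int_overlap by blast
    then show False
      using thue_morse_overlap_free by blast
  qed
qed

end
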